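(* Let $\mathcal{M}=\langle M,\circ,e\rangle$ be an mge monoid and let $m,n\in M$ be such that the equation $mx=n$ has a solution $x\in M$. Then the solution is unique, and if $\langle x_1,x_2\rangle$ is an mge of $\langle m,n\rangle$ then $x_2$ is invertible and $x=x_1x_2^{-1}$.
   Context: In a monoid $\langle M,\circ,e\rangle$, a tuple $\langle m_1,\dots,m_n\rangle\in M^n$ is equalizable if there is $\langle x_1,\dots,x_n\rangle\in M^n$ (an equalizer) with $m_1x_1=\dots=m_nx_n$; an equalizer is a most general equalizer (mge) if every equalizer has the form $\langle x_1x,\dots,x_nx\rangle$ for some $x\in M$. An mge monoid is a monoid with right cancellation ($ac=bc\Rightarrow a=b$) in which every equalizable pair has an mge. An element $m$ is invertible if $mn=e$ for some $n\in M$; this $n$ is unique and denoted $m^{-1}$. *)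

theory Defs
  imports Main
begin

text \<open>Monoids are modelled by the type class monoid_mult (operation *, unit 1).
  Equalizers / mges are defined for pairs, the only tuples needed here.\<close>

definition is_equalizer :: "'a::monoid_mult \<Rightarrow> 'a \<Rightarrow> 'a \<Rightarrow> 'a \<Rightarrow> bool" where
  "is_equalizer m1 m2 x1 x2 \<longleftrightarrow> m1 * x1 = m2 * x2"

definition equalizable :: "'a::monoid_mult \<Rightarrow> 'a \<Rightarrow> bool" where
  "equalizable m1 m2 \<longleftrightarrow> (\<exists>x1 x2. is_equalizer m1 m2 x1 x2)"

definition is_mge :: "'a::monoid_mult \<Rightarrow> 'a \<Rightarrow> 'a \<Rightarrow> 'a \<Rightarrow> bool" where
  "is_mge m1 m2 x1 x2 \<longleftrightarrow> is_equalizer m1 m2 x1 x2 \<and>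
     (\<forall>y1 y2. is_equalizer m1 m2 y1 y2 \<longrightarrow> (\<exists>x. y1 = x1 * x \<and> y2 = x2 * x))"

definition right_cancellative :: "'a::monoid_mult itself \<Rightarrow> bool" where
  "right_cancellative _ \<longleftrightarrow> (\<forall>a b c :: 'a. a * c = b * c \<longrightarrow> a = b)"

definition mge_monoid :: "'a::monoid_mult itself \<Rightarrow> bool" where
  "mge_monoid T \<longleftrightarrow> right_cancellative T \<and>
     (\<forall>m1 m2 :: 'a. equalizable m1 m2 \<longrightarrow> (\<exists>x1 x2. is_mge m1 m2 x1 x2))"

definition invertible :: "'a::monoid_mult \<Rightarrow> bool" where
  "invertible m \<longleftrightarrow> (\<exists>n. m * n = 1)"

definition minv :: "'a::monoid_mult \<Rightarrow> 'a" where
  "minv m = (THE n. m * n = 1)"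

end

theory Submission
  imports Defs
begin

(* A solution y of m y = n gives the equalizer (y, 1) of (m, n); factoring it through an mge
   (x1, x2) yields y = x1 c with x2 c = 1. Right cancellation makes c a two-sided inverse of x2,
   so c = x2^-1 and every solution equals x1 x2^-1. *)

lemma right_inverse_imp_left_inverse:
  fixes x a :: "'a::monoid_mult"
  assumes "right_cancellative TYPE('a)" and "x * a = 1"
  shows "a * x = 1"
proof -
  have "a * x * a = 1 * a"
    by (simp add: mult.assoc assms(2))
  then show ?thesis
    using assms(1) unfolding right_cancellative_def by blast
qed

lemma minv_eq_right_inverse:
  fixes x a :: "'a::monoid_mult"
  assumes "right_cancellative TYPE('a)" and "x * a = 1"
  shows "minv x = a"
  unfolding minv_def
proof (rule the_equality)
  show "x * a = 1" by (fact assms(2))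
next
  fix b assume "x * b = 1"
  have "b = a * x * b"
    using right_inverse_imp_left_inverse[OF assms] by simp
  also have "\<dots> = a"
    by (simp add: mult.assoc \<open>x * b = 1\<close>)
  finally show "b = a" .
qed

lemma equalizable_if_solution:
  fixes m n y :: "'a::monoid_mult"
  assumes "m * y = n"
  shows "equalizable m n"
  unfolding equalizable_def is_equalizer_def
  using assms by (intro exI[of _ y] exI[of _ 1]) simp

lemma mge_factors_solution:
  fixes m n y x1 x2 :: "'a::monoid_mult"
  assumes "is_mge m n x1 x2" and "m * y = n"
  obtains c where "y = x1 * c" and "x2 * c = 1"
proof -
  have "is_equalizer m n y 1"
    unfolding is_equalizer_def using assms(2) by simp
  then obtain c where "y = x1 * c" "1 = x2 * c"
    using assms(1) unfolding is_mge_def by blast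
  then show thesis using that by simp
qed

lemma mge_solution_eq:
  fixes m n y x1 x2 :: "'a::monoid_mult"
  assumes "right_cancellative TYPE('a)" and "is_mge m n x1 x2" and "m * y = n"
  shows "invertible x2 \<and> y = x1 * minv x2"
proof -
  obtain c where "y = x1 * c" and "x2 * c = 1"
    using mge_factors_solution[OF assms(2,3)] .
  then show ?thesis
    using minv_eq_right_inverse[OF assms(1)] unfolding invertible_def by auto
qed

theorem lemma4:
  fixes m n x :: "'a::monoid_mult"
  assumes "mge_monoid TYPE('a)"
    and "m * x = n"
  shows "(\<forall>y. m * y = n \<longrightarrow> y = x) \<and>
         (\<forall>x1 x2. is_mge m n x1 x2 \<longrightarrow> invertible x2 \<and> x = x1 * minv x2)"
proof -
  have rc: "right_cancellative TYPE('a)"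
    using assms(1) unfolding mge_monoid_def by blast
  obtain x1 x2 where mge: "is_mge m n x1 x2"
    using assms(1) equalizable_if_solution[OF assms(2)] unfolding mge_monoid_def by blast
  have "y = x" if "m * y = n" for y
    using mge_solution_eq[OF rc mge that] mge_solution_eq[OF rc mge assms(2)] by simp
  then show ?thesis
    using mge_solution_eq[OF rc _ assms(2)] by blast
qed

end
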